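(* Let $t\in[0,1]$ and let $(h,k)\in[0,1]^2$ be a point of ROC space that outperforms both baseline classifiers, i.e. $\mathrm{Cost}(h,k,t)<\mathrm{Cost}(0,0,t)$ and $\mathrm{Cost}(h,k,t)<\mathrm{Cost}(1,1,t)$. Then the area of lesser classifiers of $(h,k)$ is $$A_t(h,k)=1+\frac{(1-k)^2}{2}+\frac{h^2}{2}-h(1-k)-\frac{(1-k)^2}{2t}-\frac{h^2}{2(1-t)}.$$
   Context: ROC space is $[0,1]^2$, a point $(x,y)$ representing a binary classifier with false positive rate $x$ and true positive rate $y$. For $t\in[0,1]$, the normalized expected cost of $(x,y)$ is $\mathrm{Cost}(x,y,t)=tx+(1-t)(1-y)$. The baseline classifiers are the points $(0,0)$ (label everything negative) and $(1,1)$ (label everything positive). The area of lesser classifiers $A_t(h,k)$ is the area (Lebesgue measure) of the set of points $(h',k')\in[0,1]^2$ with $\mathrm{Cost}(h',k',t)>\mathrm{Cost}(h,k,t)$. *)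

theory Defs
  imports "HOL-Analysis.Analysis"
begin

text \<open>Normalized expected cost of the ROC point (x,y) (x = FPR, y = TPR) at cost parameter t.\<close>
definition Cost :: "real \<Rightarrow> real \<Rightarrow> real \<Rightarrow> real" where
  "Cost x y t = t * x + (1 - t) * (1 - y)"

definition area_lesser :: "real \<Rightarrow> real \<Rightarrow> real \<Rightarrow> real" where
  "area_lesser t h k =
     measure (lborel :: (real \<times> real) measure) {(h', k'). h' \<in> {0..1} \<and> k' \<in> {0..1} \<and>
                                     Cost h' k' t > Cost h k t}"

end

theory Submission
  imports Defs
begin

text \<open>The ROC points that do not beat (h,k) at cost parameter t form the right triangle cut off
  the corner (0,1) by the iso-cost line through (h,k); beating both baselines means exactly that
  this line meets the two edges x = 0 and y = 1 inside the square. The triangle has legs c/t and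
  c/(1-t), where c is the cost of (h,k), so the area of lesser classifiers is 1 - c^2/(2t(1-t)),
  which expands to the stated formula.\<close>

lemma has_integral_linear_decreasing:
  fixes a b c :: real
  assumes "0 < a" and "0 < b" and "0 \<le> c"
  shows "((\<lambda>x. (c - a * x) / b) has_integral c^2 / (2 * a * b)) {0..c/a}"
proof -
  define F where "F x = (c * x - a * x^2 / 2) / b" for x :: real
  have "((\<lambda>x. (c - a * x) / b) has_integral F (c/a) - F 0) {0..c/a}"
  proof (rule fundamental_theorem_of_calculus)
    show "0 \<le> c / a" using assms by simp
  next
    fix x :: real
    have "(F has_real_derivative (c - a * x) / b) (at x)"
      unfolding F_def using assms by (auto intro!: derivative_eq_intros)
    then show "(F has_vector_derivative (c - a * x) / b) (at x within {0..c/a})"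
      by (simp add: has_real_derivative_iff_has_vector_derivative has_vector_derivative_at_within)
  qed
  moreover have "F (c/a) - F 0 = c^2 / (2 * a * b)"
    using assms by (simp add: F_def field_simps power2_eq_square)
  ultimately show ?thesis by simp
qed

definition corner_triangle :: "real \<Rightarrow> real \<Rightarrow> real \<Rightarrow> (real \<times> real) set" where
  "corner_triangle a b c = {(x, y). 0 \<le> x \<and> y \<le> 1 \<and> a * x + b * (1 - y) \<le> c}"

lemma closed_corner_triangle: "closed (corner_triangle a b c)"
  unfolding corner_triangle_def case_prod_unfold
  by (intro closed_Collect_conj closed_Collect_le continuous_intros)

lemma corner_triangle_subset_unit_square:
  assumes "0 < a" and "0 < b" and "c < a" and "c < b"
  shows "corner_triangle a b c \<subseteq> {0..1} \<times> {0..1}"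
proof
  fix p assume "p \<in> corner_triangle a b c"
  then obtain x y where p: "p = (x, y)" and "0 \<le> x" "y \<le> 1" "a * x + b * (1 - y) \<le> c"
    by (auto simp: corner_triangle_def)
  then have "a * x < a * 1" and "b * (1 - y) < b * 1"
    using assms mult_nonneg_nonneg[of a x] mult_nonneg_nonneg[of b "1 - y"] by linarith+
  then have "x < 1" and "0 < y"
    using assms by (simp_all only: mult_less_cancel_left_pos)
  with \<open>0 \<le> x\<close> \<open>y \<le> 1\<close> show "p \<in> {0..1} \<times> {0..1}"
    by (simp add: p)
qed

lemma emeasure_corner_triangle:
  fixes a b c :: real
  assumes "0 < a" and "0 < b" and "0 \<le> c"
  shows "emeasure lborel (corner_triangle a b c) = ennreal (c^2 / (2 * a * b))"
proof -
  let ?T = "corner_triangle a b c"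
  have slice: "Pair x -` ?T = (if x \<in> {0..c/a} then {1 - (c - a * x) / b .. 1} else {})" for x
  proof (cases "0 \<le> x")
    case True
    have "a * x \<le> c" if "y \<le> 1" and "a * x + b * (1 - y) \<le> c" for y
      using that assms mult_nonneg_nonneg[of b "1 - y"] by linarith
    with True show ?thesis
      using assms by (auto simp: corner_triangle_def field_simps)
  qed (auto simp: corner_triangle_def)
  have "?T \<in> sets (lborel \<Otimes>\<^sub>M lborel)"
    using closed_corner_triangle by (simp only: lborel_prod) simp
  then have "emeasure lborel ?T = (\<integral>\<^sup>+x. emeasure lborel (Pair x -` ?T) \<partial>lborel)"
    by (simp add: lborel.emeasure_pair_measure_alt flip: lborel_prod)
  also have "\<dots> = (\<integral>\<^sup>+x. ennreal (indicator {0..c/a} x * ((c - a * x) / b)) \<partial>lborel)"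
  proof (intro nn_integral_cong)
    fix x :: real
    show "emeasure lborel (Pair x -` ?T) = ennreal (indicator {0..c/a} x * ((c - a * x) / b))"
      unfolding slice using assms by (simp add: field_simps)
  qed
  also have "\<dots> = ennreal (c^2 / (2 * a * b))"
    using nn_integral_has_integral_lebesgue[OF _ has_integral_linear_decreasing[OF assms]] assms
    by (simp add: field_simps)
  finally show ?thesis .
qed

lemma emeasure_unit_square: "emeasure lborel ({0..1} \<times> {0..1} :: (real \<times> real) set) = 1"
  by (simp add: lborel_prod[symmetric] lborel.emeasure_pair_measure_Times)

lemma area_lesser_eq_one_minus_corner_triangle:
  assumes "0 \<le> Cost h k t" and "Cost h k t < t" and "Cost h k t < 1 - t"
  shows "area_lesser t h k = 1 - Cost h k t ^ 2 / (2 * t * (1 - t))"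
proof -
  define c where "c = Cost h k t"
  define T where "T = corner_triangle t (1 - t) c"
  have t: "0 < t" "0 < 1 - t" and c: "0 \<le> c" "c < t" "c < 1 - t"
    using assms by (simp_all add: c_def)
  have "area_lesser t h k = measure lborel ({0..1} \<times> {0..1} - T)"
    unfolding area_lesser_def T_def corner_triangle_def c_def Cost_def
    by (rule arg_cong[where f = "measure lborel"]) auto
  also have "\<dots> = measure lborel ({0..1} \<times> {0..1} :: (real \<times> real) set) - measure lborel T"
    using emeasure_unit_square corner_triangle_subset_unit_square[OF t c(2,3)] closed_corner_triangle
    by (intro measure_Diff) (simp_all add: T_def borel_closed closed_Times)
  also have "\<dots> = 1 - c^2 / (2 * t * (1 - t))"
    using emeasure_unit_square emeasure_corner_triangle[OF t c(1)] t
    by (simp add: measure_def T_def)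
  finally show ?thesis
    by (simp add: c_def)
qed

theorem lemma22:
  fixes t h k :: real
  assumes "t \<in> {0..1}" and "h \<in> {0..1}" and "k \<in> {0..1}"
    and "Cost h k t < Cost 0 0 t" and "Cost h k t < Cost 1 1 t"
  shows "area_lesser t h k =
    1 + (1 - k)^2 / 2 + h^2 / 2 - h * (1 - k) - (1 - k)^2 / (2 * t) - h^2 / (2 * (1 - t))"
proof -
  have "0 \<le> Cost h k t"
    using assms(1-3) by (simp add: Cost_def)
  moreover have "Cost h k t < t" and "Cost h k t < 1 - t"
    using assms(4,5) by (simp_all add: Cost_def)
  ultimately have "area_lesser t h k = 1 - Cost h k t ^ 2 / (2 * t * (1 - t))"
    and "0 < t" and "t < 1"
    by (simp_all add: area_lesser_eq_one_minus_corner_triangle)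
  then show ?thesis
    by (simp add: Cost_def field_simps power2_eq_square)
qed

end
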